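(* Let $\mathcal{A}$ be a finite totally ordered alphabet and let $\mathbf{Ch}(\mathcal{A})$ be the Chinese monoid over $\mathcal{A}$. Then $\mathbf{Ch}(\mathcal{A})$ is of type 1: for every function $\sigma:\mathcal{A}\to\mathbb{N}_{\geq 2}$, the map $\phi_\sigma=\theta\times\operatorname{ev}_\sigma:\mathbf{Ch}(\mathcal{A},\sigma)\to \mathbf{Ch}(\mathcal{A},2)\times\mathbf{Com}(\mathcal{A},\sigma)$ is injective.
   Context: The Chinese monoid $\mathbf{Ch}(\mathcal{A})$ is the quotient of the free monoid $\mathcal{A}^*$ by the relations $cba=cab=bca$ for $a<b<c$, and $aba=baa$, $bba=bab$ for $a<b$ ($a,b,c\in\mathcal{A}$). For $\sigma:\mathcal{A}\to\mathbb{N}_{\geq2}$, $\mathbf{Ch}(\mathcal{A},\sigma)$ is the quotient of $\mathbf{Ch}(\mathcal{A})$ obtained by adding the relations $a^{\sigma(a)}=a$ for every $a\in\mathcal{A}$; $\mathbf{Ch}(\mathcal{A},2)$ is the case where $\sigma$ is constant equal to $2$. $\mathbf{Com}(\mathcal{A},\sigma)$ is the quotient of the free commutative monoid on $\mathcal{A}$ by the relations $a^{\sigma(a)}=a$, $a\in\mathcal{A}$. The maps $\theta:\mathbf{Ch}(\mathcal{A},\sigma)\to\mathbf{Ch}(\mathcal{A},2)$ and $\operatorname{ev}_\sigma:\mathbf{Ch}(\mathcal{A},\sigma)\to\mathbf{Com}(\mathcal{A},\sigma)$ are the natural surjective morphisms (induced by the identity on $\mathcal{A}$), and $\phi_\sigma(x)=(\theta(x),\operatorname{ev}_\sigma(x))$.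 *)

theory Defs
  imports Main
begin

text \<open>Monoids given by presentations are represented on the free monoid of words
  (lists): two words represent the same element of the quotient monoid iff they are
  related by the congruence generated by the defining relations.\<close>

definition rw_step :: "('a list \<Rightarrow> 'a list \<Rightarrow> bool) \<Rightarrow> 'a list \<Rightarrow> 'a list \<Rightarrow> bool" where
  "rw_step R u v \<longleftrightarrow> (\<exists>x y l r. R l r \<and> u = x @ l @ y \<and> v = x @ r @ y)"

definition pres_cong :: "('a list \<Rightarrow> 'a list \<Rightarrow> bool) \<Rightarrow> 'a list \<Rightarrow> 'a list \<Rightarrow> bool" where
  "pres_cong R = equivclp (rw_step R)"

definition chinese_rel :: "'a::linorder list \<Rightarrow> 'a list \<Rightarrow> bool" where
  "chinese_rel l r \<longleftrightarrow>
     (\<exists>a b c. a < b \<and> b < c \<and>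
        ((l = [c,b,a] \<and> r = [c,a,b]) \<or> (l = [c,a,b] \<and> r = [b,c,a]))) \<or>
     (\<exists>a b. a < b \<and> ((l = [a,b,a] \<and> r = [b,a,a]) \<or> (l = [b,b,a] \<and> r = [b,a,b])))"

definition chinese_sigma_rel :: "('a::linorder \<Rightarrow> nat) \<Rightarrow> 'a list \<Rightarrow> 'a list \<Rightarrow> bool" where
  "chinese_sigma_rel \<sigma> l r \<longleftrightarrow> chinese_rel l r \<or> (\<exists>a. l = replicate (\<sigma> a) a \<and> r = [a])"

definition ch_sigma_eq :: "('a::linorder \<Rightarrow> nat) \<Rightarrow> 'a list \<Rightarrow> 'a list \<Rightarrow> bool" where
  "ch_sigma_eq \<sigma> = pres_cong (chinese_sigma_rel \<sigma>)"

definition com_sigma_rel :: "('a \<Rightarrow> nat) \<Rightarrow> 'a list \<Rightarrow> 'a list \<Rightarrow> bool" where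
  "com_sigma_rel \<sigma> l r \<longleftrightarrow>
     (\<exists>a b. l = [a,b] \<and> r = [b,a]) \<or> (\<exists>a. l = replicate (\<sigma> a) a \<and> r = [a])"

text \<open>ev_sigma u = ev_sigma v in Com(A,sigma).\<close>
definition com_sigma_eq :: "('a \<Rightarrow> nat) \<Rightarrow> 'a list \<Rightarrow> 'a list \<Rightarrow> bool" where
  "com_sigma_eq \<sigma> = pres_cong (com_sigma_rel \<sigma>)"

end

theory Submission
  imports Defs "HOL-Library.Multiset"
begin

(* For c :: 'a \<Rightarrow> nat, inflating a word w by c raises the first occurrence of every letter b
   in w to the power b^(1 + c b). In Ch(A,\<sigma>) the word a^i y a^j depends only on i + j (for
   i, j \<ge> 1); hence doubling the first occurrence of a equals doubling any occurrence, and
   doubling a first occurrence respects each defining relation, so inflation is well defined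
   on Ch(A,\<sigma>). A step aa \<rightarrow> a of Ch(A,2) is undone by inflating a, so u = v in Ch(A,2)
   yields c, c' with inflate c u = inflate c' v in Ch(A,\<sigma>) and |u|_b + c b = |v|_b + c' b
   for all b. If also ev_\<sigma> u = ev_\<sigma> v, then |u|_b = |v|_b mod (\<sigma> b - 1), so c b = c' b
   mod (\<sigma> b - 1) and both can be padded to multiples of \<sigma> b - 1; inflating by such
   multiples does nothing since b^(\<sigma> b) = b. *)

section \<open>Congruences given by presentations\<close>

lemma pres_cong_least:
  assumes "equivp Q" and "\<And>x y l r. R l r \<Longrightarrow> Q (x @ l @ y) (x @ r @ y)"
    and "pres_cong R u v"
  shows "Q u v"
  using assms(3) unfolding pres_cong_def
proof (induction rule: equivclp_induct)
  case base
  show ?case using assms(1) by (simp add: equivp_reflp)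
next
  case (step v w)
  then show ?case
    using assms(1,2) unfolding rw_step_def
    by (metis equivp_symp equivp_transp)
qed

lemma pres_cong_refl [simp]: "pres_cong R u u"
  unfolding pres_cong_def by simp

lemma pres_cong_sym [sym]: "pres_cong R u v \<Longrightarrow> pres_cong R v u"
  unfolding pres_cong_def by (rule equivclp_sym)

lemma pres_cong_trans [trans]: "pres_cong R u v \<Longrightarrow> pres_cong R v w \<Longrightarrow> pres_cong R u w"
  unfolding pres_cong_def by (rule equivclp_trans)

lemma pres_cong_map:
  assumes "\<And>x y l r. R l r \<Longrightarrow> pres_cong R' (f (x @ l @ y)) (f (x @ r @ y))"
    and "pres_cong R u v"
  shows "pres_cong R' (f u) (f v)"
proof (rule pres_cong_least[where Q = "\<lambda>u v. pres_cong R' (f u) (f v)", OF _ assms])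
  show "equivp (\<lambda>u v. pres_cong R' (f u) (f v))"
    by (intro equivpI reflpI sympI transpI) (auto intro: pres_cong_sym pres_cong_trans)
qed

lemma pres_cong_invariant:
  assumes "\<And>x y l r. R l r \<Longrightarrow> f (x @ l @ y) = f (x @ r @ y)" and "pres_cong R u v"
  shows "f u = f v"
proof (rule pres_cong_least[where Q = "\<lambda>u v. f u = f v", OF _ assms])
  show "equivp (\<lambda>u v. f u = f v)"
    by (intro equivpI reflpI sympI transpI) auto
qed

lemma pres_cong_rule:
  "R l r \<Longrightarrow> pres_cong R (p @ l @ q) (p @ r @ q)"
  unfolding pres_cong_def rw_step_def by (blast intro: r_into_equivclp)

lemma pres_cong_mono:
  assumes "\<And>l r. R l r \<Longrightarrow> R' l r" and "pres_cong R u v"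
  shows "pres_cong R' u v"
proof -
  have "pres_cong R' (id u) (id v)"
    by (rule pres_cong_map[OF _ assms(2)]) (simp add: assms(1) pres_cong_rule)
  then show ?thesis by simp
qed

lemma pres_cong_append_context:
  assumes "pres_cong R u v"
  shows "pres_cong R (p @ u @ q) (p @ v @ q)"
proof (rule pres_cong_map[where f = "\<lambda>w. p @ w @ q", OF _ assms])
  fix x y l r
  assume "R l r"
  then show "pres_cong R ((\<lambda>w. p @ w @ q) (x @ l @ y)) ((\<lambda>w. p @ w @ q) (x @ r @ y))"
    using pres_cong_rule[of R l r "p @ x" "y @ q"] by simp
qed

lemma pres_cong_append_contextI:
  "pres_cong R u v \<Longrightarrow> U = p @ u @ q \<Longrightarrow> V = p @ v @ q \<Longrightarrow> pres_cong R U V"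
  using pres_cong_append_context by blast

section \<open>Identities in the Chinese monoid\<close>

abbreviation chinese_eq :: "'a::linorder list \<Rightarrow> 'a list \<Rightarrow> bool" (infix "\<sim>" 50) where
  "u \<sim> v \<equiv> pres_cong chinese_rel u v"

lemma chinese_eqI:
  "chinese_rel l r \<Longrightarrow> U = p @ l @ q \<Longrightarrow> V = p @ r @ q \<Longrightarrow> U \<sim> V"
  using pres_cong_rule by blast

lemma chinese_rel_aba: "a < b \<Longrightarrow> chinese_rel [a,b,a] [b,a,a]"
  unfolding chinese_rel_def by blast

lemma chinese_rel_bba: "a < b \<Longrightarrow> chinese_rel [b,b,a] [b,a,b]"
  unfolding chinese_rel_def by blast

lemma chinese_rel_cba: "a < b \<Longrightarrow> b < c \<Longrightarrow> chinese_rel [c,b,a] [c,a,b]"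
  unfolding chinese_rel_def by blast

lemma chinese_rel_cab: "a < b \<Longrightarrow> b < c \<Longrightarrow> chinese_rel [c,a,b] [b,c,a]"
  unfolding chinese_rel_def by blast

lemma chinese_eq_smaller_past_powers:
  assumes "x < a"
  shows "a # x # replicate q a \<sim> replicate (Suc q) a @ [x]"
proof (induction q)
  case (Suc q)
  have "a # x # replicate (Suc q) a \<sim> a # a # x # replicate q a"
    by (rule pres_cong_sym, rule chinese_eqI[OF chinese_rel_bba[OF assms], where p = "[]"]) simp_all
  also have "\<dots> \<sim> a # replicate (Suc q) a @ [x]"
    by (rule pres_cong_append_contextI[OF Suc.IH, where p = "[a]" and q = "[]"]) simp_all
  finally show ?case by simp
qed simp

lemma chinese_eq_larger_past_powers:
  assumes "a < z"
  shows "z # replicate (Suc q) a \<sim> replicate q a @ [z, a]"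
proof (induction q)
  case (Suc q)
  have "z # replicate (Suc (Suc q)) a \<sim> a # z # replicate (Suc q) a"
    by (rule pres_cong_sym, rule chinese_eqI[OF chinese_rel_aba[OF assms], where p = "[]"]) simp_all
  also have "\<dots> \<sim> a # replicate q a @ [z, a]"
    by (rule pres_cong_append_contextI[OF Suc.IH, where p = "[a]" and q = "[]"]) simp_all
  finally show ?case by simp
qed simp

lemma chinese_eq_powers_commute_pair:
  assumes "x < a" and "a < z"
  shows "replicate i a @ [z, x] \<sim> [z, x] @ replicate i a"
proof (induction i)
  case (Suc i)
  have "replicate (Suc i) a @ [z, x] \<sim> replicate i a @ [z, x, a]"
    by (rule pres_cong_sym, rule chinese_eqI[OF chinese_rel_cab[OF assms],
          where p = "replicate i a"])
       (simp_all add: replicate_append_same[symmetric])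
  also have "\<dots> \<sim> [z, x] @ replicate i a @ [a]"
    by (rule pres_cong_append_contextI[OF Suc.IH, where p = "[]" and q = "[a]"]) simp_all
  finally show ?case by (simp add: replicate_append_same)
qed simp

lemma chinese_eq_two_larger:
  assumes "x < y" and "x < z"
  shows "[y, z, x] \<sim> [max y z, x, min y z]"
proof -
  consider "z < y" | "z = y" | "y < z" by fastforce
  then show ?thesis
  proof cases
    case 1
    then show ?thesis
      by (intro chinese_eqI[OF chinese_rel_cba[OF assms(2) 1],
            where p = "[]" and q = "[]"]) simp_all
  next
    case 2
    then show ?thesis
      by (intro chinese_eqI[OF chinese_rel_bba[OF assms(1)], where p = "[]" and q = "[]"]) simp_all
  next
    case 3
    have "[z, x, y] \<sim> [y, z, x]"
      by (rule chinese_eqI[OF chinese_rel_cab[OF assms(1) 3], where p = "[]" and q = "[]"]) simp_all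
    then have "[y, z, x] \<sim> [z, x, y]" by (rule pres_cong_sym)
    moreover have "max y z = z" and "min y z = y" using 3 by auto
    ultimately show ?thesis by simp
  qed
qed

lemma chinese_eq_straddling_prefix:
  assumes "a \<notin> set y" and "a < hd y" and "\<exists>w\<in>set y. w < a"
  shows "\<exists>z x Q. a < z \<and> x < a \<and> y \<sim> z # x # Q \<and> length Q + 2 = length y"
  using assms
proof (induction y)
  case (Cons z1 y1)
  then have "a < z1" by simp
  then obtain t y2 where y1: "y1 = t # y2"
    using Cons.prems by (cases y1) auto
  show ?case
  proof (cases "t < a")
    case True
    then show ?thesis
      using \<open>a < z1\<close> y1 by (intro exI[of _ z1] exI[of _ t] exI[of _ y2]) simp
  next
    case False
    then have "a < t" using Cons.prems y1 by (cases "t = a") auto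
    moreover have "a \<notin> set y1" and "\<exists>w\<in>set y1. w < a"
      using Cons.prems \<open>a < z1\<close> by auto
    ultimately obtain z2 x2 Q2 where "a < z2" "x2 < a" and y1_eq: "y1 \<sim> z2 # x2 # Q2"
      and "length Q2 + 2 = length y1"
      using Cons.IH y1 by auto
    have "z1 # y1 \<sim> [z1, z2, x2] @ Q2"
      by (rule pres_cong_append_contextI[OF y1_eq, where p = "[z1]" and q = "[]"]) simp_all
    also have "\<dots> \<sim> [max z1 z2, x2, min z1 z2] @ Q2"
      using \<open>a < z1\<close> \<open>a < z2\<close> \<open>x2 < a\<close>
      by (intro pres_cong_append_context[where p = "[]" and q = Q2, simplified]
          chinese_eq_two_larger) auto
    finally have "z1 # y1 \<sim> max z1 z2 # x2 # min z1 z2 # Q2" by simp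
    moreover have "a < max z1 z2" using \<open>a < z1\<close> by (simp add: less_max_iff_disj)
    ultimately show ?thesis
      using \<open>x2 < a\<close> \<open>length Q2 + 2 = length y1\<close> by fastforce
  qed
qed simp

section \<open>Identities in Ch(A,\<sigma>)\<close>

locale chinese_sigma =
  fixes \<sigma> :: "'a::linorder \<Rightarrow> nat"
  assumes sigma_ge_2: "2 \<le> \<sigma> a"
begin

abbreviation sigma_eq :: "'a list \<Rightarrow> 'a list \<Rightarrow> bool" (infix "\<approx>" 50) where
  "u \<approx> v \<equiv> ch_sigma_eq \<sigma> u v"

lemma sigma_pos: "0 < \<sigma> a"
  using sigma_ge_2[of a] by simp

lemma sigma_eq_refl [simp]: "u \<approx> u"
  unfolding ch_sigma_eq_def by simp

lemma sigma_eq_sym [sym]: "u \<approx> v \<Longrightarrow> v \<approx> u"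
  unfolding ch_sigma_eq_def by (rule pres_cong_sym)

lemma sigma_eq_trans [trans]: "u \<approx> v \<Longrightarrow> v \<approx> w \<Longrightarrow> u \<approx> w"
  unfolding ch_sigma_eq_def by (rule pres_cong_trans)

lemma sigma_eq_append_contextI:
  "u \<approx> v \<Longrightarrow> U = p @ u @ q \<Longrightarrow> V = p @ v @ q \<Longrightarrow> U \<approx> V"
  unfolding ch_sigma_eq_def using pres_cong_append_context by blast

lemma sigma_eq_of_chinese_eq: "u \<sim> v \<Longrightarrow> u \<approx> v"
  unfolding ch_sigma_eq_def
  by (rule pres_cong_mono[of chinese_rel]) (simp_all add: chinese_sigma_rel_def)

lemma sigma_eq_chineseI:
  "chinese_rel l r \<Longrightarrow> U = p @ l @ q \<Longrightarrow> V = p @ r @ q \<Longrightarrow> U \<approx> V"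
  using sigma_eq_of_chinese_eq chinese_eqI by blast

lemma replicate_sigma: "replicate (\<sigma> a) a \<approx> [a]"
  unfolding ch_sigma_eq_def
  using pres_cong_rule[of "chinese_sigma_rel \<sigma>" "replicate (\<sigma> a) a" "[a]" "[]" "[]"]
  by (simp add: chinese_sigma_rel_def)

lemma replicate_sigma_step:
  assumes "0 < k"
  shows "replicate (k + (\<sigma> a - 1)) a \<approx> replicate k a"
proof -
  have "replicate (k + (\<sigma> a - 1)) a = replicate (k - 1) a @ replicate (\<sigma> a) a"
    using assms sigma_ge_2[of a] by (simp add: replicate_add[symmetric])
  also have "\<dots> \<approx> replicate (k - 1) a @ [a]"
    by (rule sigma_eq_append_contextI[OF replicate_sigma]) simp_all
  also have "\<dots> = replicate k a"
    using assms by (cases k) (simp_all add: replicate_append_same)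
  finally show ?thesis .
qed

lemma replicate_sigma_multiple: "replicate (Suc (m * (\<sigma> a - 1))) a \<approx> [a]"
proof (induction m)
  case (Suc m)
  have "replicate (Suc (Suc m * (\<sigma> a - 1))) a = replicate (Suc (m * (\<sigma> a - 1)) + (\<sigma> a - 1)) a"
    by simp
  also have "\<dots> \<approx> replicate (Suc (m * (\<sigma> a - 1))) a"
    by (rule replicate_sigma_step) simp
  finally show ?case using Suc.IH by (rule sigma_eq_trans)
qed simp

lemma replicate_smaller_first:
  assumes "x < a" and "0 < k"
  shows "replicate k a @ x # y \<approx> [a, x] @ replicate (k + (\<sigma> a - 2)) a @ y"
proof -
  have "replicate k a @ x # y \<approx> replicate (k + (\<sigma> a - 1)) a @ x # y"
    by (rule sigma_eq_sym, rule sigma_eq_append_contextI[OF replicate_sigma_step[OF assms(2), of a],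
          where p = "[]" and q = "x # y"]) simp_all
  also have "\<dots> = replicate (Suc (k + (\<sigma> a - 2))) a @ [x] @ y"
    using assms(2) sigma_ge_2[of a] by (simp add: Suc_diff_le del: replicate_Suc)
  also have "\<dots> \<approx> [a, x] @ replicate (k + (\<sigma> a - 2)) a @ y"
    using chinese_eq_smaller_past_powers[OF assms(1), of "k + (\<sigma> a - 2)"]
    by (rule pres_cong_sym[THEN sigma_eq_of_chinese_eq, THEN sigma_eq_append_contextI,
          where p = "[]" and q = y]) simp_all
  finally show ?thesis .
qed

lemma replicate_larger_last:
  assumes "a < z" and "0 < m"
  shows "z # replicate m a \<approx> replicate (m + (\<sigma> a - 2)) a @ [z, a]"
proof -
  have "z # replicate m a \<approx> z # replicate (m + (\<sigma> a - 1)) a"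
    by (rule sigma_eq_sym, rule sigma_eq_append_contextI[OF replicate_sigma_step[OF assms(2), of a],
          where p = "[z]" and q = "[]"]) simp_all
  also have "\<dots> = z # replicate (Suc (m + (\<sigma> a - 2))) a"
    using assms(2) sigma_ge_2[of a] by (simp add: Suc_diff_le del: replicate_Suc)
  also have "\<dots> \<approx> replicate (m + (\<sigma> a - 2)) a @ [z, a]"
    by (rule sigma_eq_of_chinese_eq, rule chinese_eq_larger_past_powers[OF assms(1)])
  finally show ?thesis .
qed

lemma replicate_straddling:
  assumes "x < a" and "a < z" and "y \<sim> z # x # Q"
  shows "replicate k a @ y \<approx> [z, x] @ replicate k a @ Q"
proof -
  have "replicate k a @ y \<approx> replicate k a @ [z, x] @ Q"
    by (rule sigma_eq_append_contextI[OF sigma_eq_of_chinese_eq[OF assms(3)],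
          where p = "replicate k a" and q = "[]"]) simp_all
  also have "\<dots> \<approx> [z, x] @ replicate k a @ Q"
    by (rule sigma_eq_append_contextI[OF
          sigma_eq_of_chinese_eq[OF chinese_eq_powers_commute_pair[OF assms(1,2)]],
          where p = "[]" and q = Q]) simp_all
  finally show ?thesis .
qed

text \<open>The offsets f and g do not depend on k and m, so the reduction preserves the
  hypothesis i + j = i' + j' of the induction in replicate_around_cong below.\<close>

lemma replicate_around_reduction:
  assumes "a \<notin> set y" and "y \<noteq> []"
  obtains y' p f g q where "length y' < length y"
    and "\<And>k m. 0 < k \<Longrightarrow> 0 < m \<Longrightarrow>
      replicate k a @ y @ replicate m a \<approx> p @ replicate (k + f) a @ y' @ replicate (m + g) a @ q"
proof -
  obtain x y' where y: "y = x # y'" using assms(2) by (cases y) auto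
  consider "x < a" | "a < x" "\<exists>w\<in>set y. w < a" | "\<forall>w\<in>set y. a < w"
    using assms(1) y by (metis linorder_neqE list.set_intros(1))
  then show ?thesis
  proof cases
    case 1
    show ?thesis
    proof (rule that[of y' "[a, x]" "\<sigma> a - 2" 0 "[]"])
      fix k m :: nat
      assume "0 < k"
      then show "replicate k a @ y @ replicate m a \<approx>
          [a, x] @ replicate (k + (\<sigma> a - 2)) a @ y' @ replicate (m + 0) a @ []"
        using replicate_smaller_first[OF 1, of k "y' @ replicate m a"] y by simp
    qed (simp add: y)
  next
    case 2
    then obtain z x' Q where "a < z" "x' < a" and y_eq: "y \<sim> z # x' # Q"
      and "length Q + 2 = length y"
      using chinese_eq_straddling_prefix[OF assms(1)] y by auto
    show ?thesis
    proof (rule that[of Q "[z, x']" 0 0 "[]"])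
      fix k m :: nat
      show "replicate k a @ y @ replicate m a \<approx>
          [z, x'] @ replicate (k + 0) a @ Q @ replicate (m + 0) a @ []"
        by (rule sigma_eq_append_contextI[OF replicate_straddling[OF \<open>x' < a\<close> \<open>a < z\<close> y_eq],
              where p = "[]" and q = "replicate m a"]) simp_all
    qed (use \<open>length Q + 2 = length y\<close> in simp)
  next
    case 3
    define z where "z = last y"
    have y_snoc: "y = butlast y @ [z]" and "a < z"
      using assms(2) 3 by (simp_all add: z_def)
    show ?thesis
    proof (rule that[of "butlast y" "[]" 0 "\<sigma> a - 2" "[z, a]"])
      fix k m :: nat
      assume "0 < m"
      show "replicate k a @ y @ replicate m a \<approx>
          [] @ replicate (k + 0) a @ butlast y @ replicate (m + (\<sigma> a - 2)) a @ [z, a]"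
        by (rule sigma_eq_append_contextI[OF replicate_larger_last[OF \<open>a < z\<close> \<open>0 < m\<close>],
              where p = "replicate k a @ butlast y" and q = "[]"]) (subst y_snoc, simp_all)
    qed (simp add: assms(2))
  qed
qed

lemma replicate_around_cong:
  assumes "0 < i" and "0 < j" and "0 < i'" and "0 < j'" and "i + j = i' + j'"
  shows "replicate i a @ y @ replicate j a \<approx> replicate i' a @ y @ replicate j' a"
  using assms
proof (induction "length y" arbitrary: y i j i' j' rule: less_induct)
  case less
  consider "y = []" | "a \<in> set y" | "a \<notin> set y" "y \<noteq> []" by blast
  then show ?case
  proof cases
    case 1
    then show ?thesis using less.prems by (simp add: replicate_add[symmetric])
  next
    case 2
    then obtain y1 y2 where y: "y = y1 @ a # y2" by (meson split_list)
    then have "length y1 < length y" and "length y2 < length y" by simp_all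
    note IH1 = less.hyps[OF \<open>length y1 < length y\<close>] and IH2 = less.hyps[OF \<open>length y2 < length y\<close>]
    have "replicate i a @ y @ replicate j a =
        replicate i a @ y1 @ replicate 1 a @ y2 @ replicate j a"
      by (simp add: y)
    also have "\<dots> \<approx> replicate 1 a @ y1 @ replicate i a @ y2 @ replicate j a"
      by (rule sigma_eq_append_contextI[OF IH1[of i 1 1 i],
            where p = "[]" and q = "y2 @ replicate j a"])
         (use less.prems in simp_all)
    also have "\<dots> \<approx> replicate 1 a @ y1 @ replicate i' a @ y2 @ replicate j' a"
      by (rule sigma_eq_append_contextI[OF IH2[of i j i' j'],
            where p = "replicate 1 a @ y1" and q = "[]"])
         (use less.prems in simp_all)
    also have "\<dots> \<approx> replicate i' a @ y1 @ replicate 1 a @ y2 @ replicate j' a"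
      by (rule sigma_eq_append_contextI[OF IH1[of 1 i' i' 1],
            where p = "[]" and q = "y2 @ replicate j' a"])
         (use less.prems in simp_all)
    also have "\<dots> = replicate i' a @ y @ replicate j' a"
      by (simp add: y)
    finally show ?thesis .
  next
    case 3
    obtain y' p f g q where "length y' < length y" and reduce: "\<And>k m. 0 < k \<Longrightarrow> 0 < m \<Longrightarrow>
      replicate k a @ y @ replicate m a \<approx> p @ replicate (k + f) a @ y' @ replicate (m + g) a @ q"
      using replicate_around_reduction[OF 3] by blast
    have "replicate i a @ y @ replicate j a \<approx>
        p @ replicate (i + f) a @ y' @ replicate (j + g) a @ q"
      using less.prems by (intro reduce) simp_all
    also have "\<dots> \<approx> p @ replicate (i' + f) a @ y' @ replicate (j' + g) a @ q"
      by (rule sigma_eq_append_contextI[OF less.hyps[OF \<open>length y' < length y\<close>],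
            where p = p and q = q])
         (use less.prems in simp_all)
    also have "\<dots> \<approx> replicate i' a @ y @ replicate j' a"
      by (rule sigma_eq_sym, rule reduce) (use less.prems in simp_all)
    finally show ?thesis .
  qed
qed

lemma sigma_eq_baab:
  assumes "a < b"
  shows "[b, a, a, b] \<approx> [b, b, a, a]"
proof -
  obtain m where m: "\<sigma> b = Suc (Suc m)"
    using sigma_ge_2[of b] by (metis add_2_eq_Suc le_Suc_ex)
  have "[b, a, a, b] \<approx> replicate (Suc (Suc m)) b @ [a, a, b]"
    by (rule sigma_eq_sym, rule sigma_eq_append_contextI[OF replicate_sigma_step[of 1 b],
          where p = "[]" and q = "[a, a, b]"]) (simp_all add: m)
  also have "\<dots> \<approx> b # a # replicate (Suc m) b @ [a, b]"
    by (rule sigma_eq_sym, rule sigma_eq_append_contextI[OF sigma_eq_of_chinese_eq[OF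
          chinese_eq_smaller_past_powers[OF assms, of "Suc m"]],
                where p = "[]" and q = "[a, b]"]) simp_all
  also have "\<dots> \<approx> b # a # replicate m b @ replicate 2 b @ [a]"
    by (rule sigma_eq_append_contextI[OF sigma_eq_of_chinese_eq[OF
          chinese_eq_smaller_past_powers[OF assms, of 1]],
                where p = "b # a # replicate m b" and q = "[]"])
       (simp_all add: numeral_2_eq_2 replicate_app_Cons_same)
  also have "\<dots> \<approx> replicate (Suc (Suc (Suc m))) b @ [a, a]"
    by (rule sigma_eq_append_contextI[OF sigma_eq_of_chinese_eq[OF
          chinese_eq_smaller_past_powers[OF assms, of "Suc (Suc m)"]],
                where p = "[]" and q = "[a]"])
       (simp_all add: replicate_add[symmetric])
  also have "\<dots> \<approx> [b, b, a, a]"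
    by (rule sigma_eq_append_contextI[OF replicate_sigma_step[of 2 b],
          where p = "[]" and q = "[a, a]"])
       (simp_all add: m numeral_2_eq_2)
  finally show ?thesis .
qed

lemma sigma_eq_caba:
  assumes "a < b" and "b < c"
  shows "[c, a, b, a] \<approx> [c, a, a, b]"
proof -
  have "a < c" using assms by simp
  obtain m where m: "\<sigma> c = Suc (Suc m)"
    using sigma_ge_2[of c] by (metis add_2_eq_Suc le_Suc_ex)
  have "[c, a, b, a] \<approx> replicate m c @ [c, c, a, b, a]"
    by (rule sigma_eq_sym, rule sigma_eq_append_contextI[OF replicate_sigma_step[of 1 c],
          where p = "[]" and q = "[a, b, a]"]) (simp_all add: m replicate_app_Cons_same)
  also have "\<dots> \<approx> replicate m c @ [c, a, c, b, a]"
    by (rule sigma_eq_chineseI[OF chinese_rel_bba[OF \<open>a < c\<close>],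
          where p = "replicate m c" and q = "[b, a]"])
       simp_all
  also have "\<dots> \<approx> replicate m c @ [c, a, c, a, b]"
    by (rule sigma_eq_chineseI[OF chinese_rel_cba[OF assms],
          where p = "replicate m c @ [c, a]" and q = "[]"])
       simp_all
  also have "\<dots> \<approx> replicate m c @ [c, c, a, a, b]"
    by (rule sigma_eq_sym, rule sigma_eq_chineseI[OF chinese_rel_bba[OF \<open>a < c\<close>],
          where p = "replicate m c" and q = "[a, b]"]) simp_all
  also have "\<dots> \<approx> [c, a, a, b]"
    by (rule sigma_eq_append_contextI[OF replicate_sigma_step[of 1 c],
          where p = "[]" and q = "[a, a, b]"])
       (simp_all add: m replicate_app_Cons_same)
  finally show ?thesis .
qed

lemma sigma_eq_ccab:
  assumes "a < b" and "b < c"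
  shows "[c, c, a, b] \<approx> [b, c, c, a]"
proof -
  have "a < c" using assms by simp
  obtain m where m: "\<sigma> a = Suc (Suc m)"
    using sigma_ge_2[of a] by (metis add_2_eq_Suc le_Suc_ex)
  have "[c, c, a, b] \<approx> [c, b, c, a]"
    by (rule sigma_eq_chineseI[OF chinese_rel_cab[OF assms], where p = "[c]" and q = "[]"]) simp_all
  also have "\<dots> \<approx> [c, b, c, a, a] @ replicate m a"
    by (rule sigma_eq_sym, rule sigma_eq_append_contextI[OF replicate_sigma_step[of 1 a],
          where p = "[c, b, c]" and q = "[]"]) (simp_all add: m)
  also have "\<dots> \<approx> [c, b, a, c, a] @ replicate m a"
    by (rule sigma_eq_sym, rule sigma_eq_chineseI[OF chinese_rel_aba[OF \<open>a < c\<close>],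
          where p = "[c, b]" and q = "replicate m a"]) simp_all
  also have "\<dots> \<approx> [c, a, b, c, a] @ replicate m a"
    by (rule sigma_eq_chineseI[OF chinese_rel_cba[OF assms],
          where p = "[]" and q = "[c, a] @ replicate m a"])
       simp_all
  also have "\<dots> \<approx> [b, c, a, c, a] @ replicate m a"
    by (rule sigma_eq_chineseI[OF chinese_rel_cab[OF assms],
          where p = "[]" and q = "[c, a] @ replicate m a"])
       simp_all
  also have "\<dots> \<approx> [b, c, c, a, a] @ replicate m a"
    by (rule sigma_eq_chineseI[OF chinese_rel_aba[OF \<open>a < c\<close>],
          where p = "[b, c]" and q = "replicate m a"])
       simp_all
  also have "\<dots> \<approx> [b, c, c, a]"
    by (rule sigma_eq_append_contextI[OF replicate_sigma_step[of 1 a],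
          where p = "[b, c, c]" and q = "[]"])
       (simp_all add: m)
  finally show ?thesis .
qed

end

section \<open>Doubling and inflating first occurrences\<close>

fun double_first :: "'a \<Rightarrow> 'a list \<Rightarrow> 'a list" where
  "double_first d [] = []"
| "double_first d (x # w) = (if x = d then d # d # w else x # double_first d w)"

lemma double_first_append: "a \<notin> set x \<Longrightarrow> double_first a (x @ a # y) = x @ a # a # y"
  by (induction x) auto

fun inflate :: "'a set \<Rightarrow> ('a \<Rightarrow> nat) \<Rightarrow> 'a list \<Rightarrow> 'a list" where
  "inflate S c [] = []"
| "inflate S c (x # w) =
     (if x \<in> S then [x] else replicate (Suc (c x)) x) @ inflate (insert x S) c w"

lemma inflate_append: "inflate S c (p @ q) = inflate S c p @ inflate (S \<union> set p) c q"
  by (induction p arbitrary: S) auto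

lemma inflate_cong:
  "(\<And>x. x \<in> set w \<Longrightarrow> x \<notin> S \<Longrightarrow> c x = c' x) \<Longrightarrow> inflate S c w = inflate S c' w"
proof (induction w arbitrary: S)
  case (Cons x w)
  then show ?case using Cons.IH[of "insert x S"] by simp
qed simp

lemma inflate_zero: "(\<And>x. x \<in> set w \<Longrightarrow> x \<notin> S \<Longrightarrow> c x = 0) \<Longrightarrow> inflate S c w = w"
proof (induction w arbitrary: S)
  case (Cons x w)
  then have "inflate (insert x S) c w = w" by (intro Cons.IH) auto
  then show ?case using Cons.prems by auto
qed simp

lemma inflate_replicate:
  "x \<notin> S \<Longrightarrow> inflate S c (replicate (Suc k) x) = replicate (Suc (c x + k)) x"
  using inflate_zero[of "replicate k x" "insert x S" c] by (simp add: replicate_add)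

lemma inflate_inflate: "inflate S c (inflate S c' w) = inflate S (\<lambda>b. c b + c' b) w"
proof (induction w arbitrary: S)
  case (Cons x w)
  then show ?case
    by (cases "x \<in> S") (simp_all add: inflate_append inflate_replicate del: replicate_Suc)
qed simp

lemma inflate_single: "d \<notin> S \<Longrightarrow> inflate S (\<lambda>b. of_bool (b = d)) w = double_first d w"
proof (induction w arbitrary: S)
  case (Cons x w)
  show ?case
  proof (cases "x = d")
    case True
    have "inflate (insert d S) (\<lambda>b. of_bool (b = d)) w = w" by (rule inflate_zero) auto
    then show ?thesis using Cons.prems True by simp
  next
    case False
    then show ?thesis using Cons by simp
  qed
qed simp

lemma chinese_sigma_rel_set:
  assumes "\<And>a. 0 < \<sigma> a" and "chinese_sigma_rel \<sigma> l r"
  shows "set l = set r"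
  using assms unfolding chinese_sigma_rel_def chinese_rel_def by fastforce

context chinese_sigma
begin

lemma sigma_eq_double_first_cba:
  assumes "a < b" and "b < c" and "d \<in> {a, b, c}"
  shows "double_first d [c, b, a] \<approx> double_first d [c, a, b]"
proof -
  have neq: "a \<noteq> b" "a \<noteq> c" "b \<noteq> c" using assms(1,2) by simp_all
  from assms(3) consider "d = c" | "d = b" | "d = a" by auto
  then show ?thesis
  proof cases
    case 1
    have "[c, c, b, a] \<approx> [c, c, a, b]"
      by (rule sigma_eq_chineseI[OF chinese_rel_cba[OF assms(1,2)],
            where p = "[c]" and q = "[]"]) simp_all
    then show ?thesis using 1 neq by simp
  next
    case 2
    have "[c, b, b, a] \<approx> [c, b, a, b]"
      by (rule sigma_eq_chineseI[OF chinese_rel_bba[OF assms(1)],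
            where p = "[c]" and q = "[]"]) simp_all
    also have "\<dots> \<approx> [c, a, b, b]"
      by (rule sigma_eq_chineseI[OF chinese_rel_cba[OF assms(1,2)],
            where p = "[]" and q = "[b]"]) simp_all
    finally show ?thesis using 2 neq by simp
  next
    case 3
    have "[c, b, a, a] \<approx> [c, a, b, a]"
      by (rule sigma_eq_chineseI[OF chinese_rel_cba[OF assms(1,2)],
            where p = "[]" and q = "[a]"]) simp_all
    also have "\<dots> \<approx> [c, a, a, b]" by (rule sigma_eq_caba[OF assms(1,2)])
    finally show ?thesis using 3 neq by simp
  qed
qed

lemma sigma_eq_double_first_cab:
  assumes "a < b" and "b < c" and "d \<in> {a, b, c}"
  shows "double_first d [c, a, b] \<approx> double_first d [b, c, a]"
proof -
  have neq: "a \<noteq> b" "a \<noteq> c" "b \<noteq> c" using assms(1,2) by simp_all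
  from assms(3) consider "d = c" | "d = b" | "d = a" by auto
  then show ?thesis
  proof cases
    case 1
    then show ?thesis using sigma_eq_ccab[OF assms(1,2)] neq by simp
  next
    case 2
    have "[c, a, b, b] \<approx> [b, c, a, b]"
      by (rule sigma_eq_chineseI[OF chinese_rel_cab[OF assms(1,2)],
            where p = "[]" and q = "[b]"]) simp_all
    also have "\<dots> \<approx> [b, b, c, a]"
      by (rule sigma_eq_chineseI[OF chinese_rel_cab[OF assms(1,2)],
            where p = "[b]" and q = "[]"]) simp_all
    finally show ?thesis using 2 neq by simp
  next
    case 3
    have "[c, a, a, b] \<approx> [c, a, b, a]" by (rule sigma_eq_sym, rule sigma_eq_caba[OF assms(1,2)])
    also have "\<dots> \<approx> [b, c, a, a]"
      by (rule sigma_eq_chineseI[OF chinese_rel_cab[OF assms(1,2)],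
            where p = "[]" and q = "[a]"]) simp_all
    finally show ?thesis using 3 neq by simp
  qed
qed

lemma sigma_eq_double_first_aba:
  assumes "a < b" and "d \<in> {a, b}"
  shows "double_first d [a, b, a] \<approx> double_first d [b, a, a]"
proof -
  have neq: "a \<noteq> b" using assms(1) by simp
  from assms(2) consider "d = b" | "d = a" by auto
  then show ?thesis
  proof cases
    case 1
    have "[a, b, b, a] \<approx> [a, b, a, b]"
      by (rule sigma_eq_chineseI[OF chinese_rel_bba[OF assms(1)],
            where p = "[a]" and q = "[]"]) simp_all
    also have "\<dots> \<approx> [b, a, a, b]"
      by (rule sigma_eq_chineseI[OF chinese_rel_aba[OF assms(1)],
            where p = "[]" and q = "[b]"]) simp_all
    also have "\<dots> \<approx> [b, b, a, a]" by (rule sigma_eq_baab[OF assms(1)])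
    finally show ?thesis using 1 neq by simp
  next
    case 2
    have "[a, a, b, a] \<approx> [a, b, a, a]"
      by (rule sigma_eq_chineseI[OF chinese_rel_aba[OF assms(1)],
            where p = "[a]" and q = "[]"]) simp_all
    also have "\<dots> \<approx> [b, a, a, a]"
      by (rule sigma_eq_chineseI[OF chinese_rel_aba[OF assms(1)],
            where p = "[]" and q = "[a]"]) simp_all
    finally show ?thesis using 2 neq by simp
  qed
qed

lemma sigma_eq_double_first_bba:
  assumes "a < b" and "d \<in> {a, b}"
  shows "double_first d [b, b, a] \<approx> double_first d [b, a, b]"
proof -
  have neq: "a \<noteq> b" using assms(1) by simp
  from assms(2) consider "d = b" | "d = a" by auto
  then show ?thesis
  proof cases
    case 1
    have "[b, b, b, a] \<approx> [b, b, a, b]"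
      by (rule sigma_eq_chineseI[OF chinese_rel_bba[OF assms(1)],
            where p = "[b]" and q = "[]"]) simp_all
    then show ?thesis using 1 neq by simp
  next
    case 2
    then show ?thesis using sigma_eq_sym[OF sigma_eq_baab[OF assms(1)]] neq by simp
  qed
qed

lemma sigma_eq_double_first_replicate_sigma:
  "double_first a (replicate (\<sigma> a) a) \<approx> double_first a [a]"
proof -
  obtain m where "\<sigma> a = Suc m"
    using sigma_ge_2[of a] by (metis Suc_le_D numeral_2_eq_2)
  moreover have "[a] @ replicate (\<sigma> a) a @ [] \<approx> [a] @ [a] @ []"
    by (rule sigma_eq_append_contextI[OF replicate_sigma[of a],
          where p = "[a]" and q = "[]"]) simp_all
  ultimately show ?thesis by simp
qed

lemma sigma_eq_double_first:
  assumes "chinese_sigma_rel \<sigma> l r" and "d \<in> set l"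
  shows "double_first d l \<approx> double_first d r"
proof -
  from assms(1) consider
      (cba) a b c where "a < b" "b < c" "l = [c, b, a]" "r = [c, a, b]"
    | (cab) a b c where "a < b" "b < c" "l = [c, a, b]" "r = [b, c, a]"
    | (aba) a b where "a < b" "l = [a, b, a]" "r = [b, a, a]"
    | (bba) a b where "a < b" "l = [b, b, a]" "r = [b, a, b]"
    | (power) a where "l = replicate (\<sigma> a) a" "r = [a]"
    unfolding chinese_sigma_rel_def chinese_rel_def by metis
  then show ?thesis
  proof cases
    case cba then show ?thesis using sigma_eq_double_first_cba[OF cba(1,2), of d] assms(2) by auto
  next
    case cab then show ?thesis using sigma_eq_double_first_cab[OF cab(1,2), of d] assms(2) by auto
  next
    case aba then show ?thesis using sigma_eq_double_first_aba[OF aba(1), of d] assms(2) by auto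
  next
    case bba then show ?thesis using sigma_eq_double_first_bba[OF bba(1), of d] assms(2) by auto
  next
    case power then show ?thesis using sigma_eq_double_first_replicate_sigma assms(2) by auto
  qed
qed

lemma sigma_eq_set: "u \<approx> v \<Longrightarrow> set u = set v"
  unfolding ch_sigma_eq_def
proof (rule pres_cong_invariant)
  fix x y l r :: "'a list"
  assume "chinese_sigma_rel \<sigma> l r"
  then have "set l = set r"
    by (rule chinese_sigma_rel_set[OF sigma_pos])
  then show "set (x @ l @ y) = set (x @ r @ y)" by simp
qed

lemma sigma_eq_inflate_single:
  assumes "u \<approx> v"
  shows "inflate {} (\<lambda>b. of_bool (b = d)) u \<approx> inflate {} (\<lambda>b. of_bool (b = d)) v"
  unfolding ch_sigma_eq_def
proof (rule pres_cong_map[OF _ assms[unfolded ch_sigma_eq_def]])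
  fix x y l r :: "'a list"
  assume rel: "chinese_sigma_rel \<sigma> l r"
  then have "set l = set r"
    by (rule chinese_sigma_rel_set[OF sigma_pos])
  have "inflate (set x) (\<lambda>b. of_bool (b = d)) l \<approx> inflate (set x) (\<lambda>b. of_bool (b = d)) r"
  proof (cases "d \<in> set x \<or> d \<notin> set l")
    case True
    then have "inflate (set x) (\<lambda>b. of_bool (b = d)) l = l"
      and "inflate (set x) (\<lambda>b. of_bool (b = d)) r = r"
      using \<open>set l = set r\<close> by (auto intro!: inflate_zero)
    then show ?thesis
      unfolding ch_sigma_eq_def
      using pres_cong_rule[of "chinese_sigma_rel \<sigma>", OF rel, of "[]" "[]"] by simp
  next
    case False
    then show ?thesis using sigma_eq_double_first[OF rel] by (simp add: inflate_single)
  qed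
  then show "pres_cong (chinese_sigma_rel \<sigma>) (inflate {} (\<lambda>b. of_bool (b = d)) (x @ l @ y))
      (inflate {} (\<lambda>b. of_bool (b = d)) (x @ r @ y))"
    unfolding ch_sigma_eq_def
    by (rule pres_cong_append_contextI) (simp_all add: inflate_append \<open>set l = set r\<close>)
qed

lemma sigma_eq_inflate_mset:
  "u \<approx> v \<Longrightarrow> inflate {} (count M) u \<approx> inflate {} (count M) v"
proof (induction M)
  case (add d M)
  have "count (add_mset d M) = (\<lambda>b. of_bool (b = d) + count M b)" by auto
  then show ?case
    using sigma_eq_inflate_single[OF add.IH[OF add.prems]] by (simp add: inflate_inflate)
qed (simp add: inflate_zero)

lemma sigma_eq_inflate:
  assumes "u \<approx> v"
  shows "inflate {} c u \<approx> inflate {} c v"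
proof -
  define M where "M = Abs_multiset (\<lambda>b. if b \<in> set u then c b else 0)"
  have "count M = (\<lambda>b. if b \<in> set u then c b else 0)"
    unfolding M_def by (rule count_Abs_multiset) (simp add: finite_subset[of _ "set u"])
  moreover have "set v = set u" using sigma_eq_set[OF assms] by simp
  ultimately have "inflate {} c u = inflate {} (count M) u"
    and "inflate {} c v = inflate {} (count M) v"
    by (auto intro: inflate_cong)
  then show ?thesis using sigma_eq_inflate_mset[OF assms] by simp
qed

lemma inflate_single_any_occurrence:
  "inflate {} (\<lambda>b. of_bool (b = a)) (x @ a # y) \<approx> x @ a # a # y"
proof (cases "a \<in> set x")
  case True
  then obtain x1 x2 where x: "x = x1 @ a # x2" and "a \<notin> set x1" by (meson split_list_first)
  have "inflate {} (\<lambda>b. of_bool (b = a)) (x @ a # y) = x1 @ replicate 2 a @ x2 @ replicate 1 a @ y"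
    using \<open>a \<notin> set x1\<close> by (simp add: x inflate_single double_first_append numeral_2_eq_2)
  also have "\<dots> \<approx> x1 @ replicate 1 a @ x2 @ replicate 2 a @ y"
    by (rule sigma_eq_append_contextI[OF replicate_around_cong[of 2 1 1 2 a x2],
          where p = x1 and q = y])
       simp_all
  also have "\<dots> = x @ a # a # y" by (simp add: x numeral_2_eq_2)
  finally show ?thesis .
next
  case False
  then show ?thesis by (simp add: inflate_single double_first_append)
qed

lemma inflate_sigma_multiples:
  "(\<And>b. b \<in> set w \<Longrightarrow> b \<notin> S \<Longrightarrow> (\<sigma> b - 1) dvd c b) \<Longrightarrow> inflate S c w \<approx> w"
proof (induction w arbitrary: S)
  case (Cons x w)
  have "inflate (insert x S) c w \<approx> w" using Cons by (intro Cons.IH) auto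
  then have rest: "[x] @ inflate (insert x S) c w \<approx> [x] @ w"
    by (rule sigma_eq_append_contextI[where p = "[x]" and q = "[]"]) simp_all
  show ?case
  proof (cases "x \<in> S")
    case True
    then show ?thesis using rest by simp
  next
    case False
    then have "(\<sigma> x - 1) dvd c x" using Cons.prems[of x] by simp
    then obtain m where "c x = m * (\<sigma> x - 1)" by (metis dvd_def mult.commute)
    then have "inflate S c (x # w) \<approx> [x] @ inflate (insert x S) c w"
      using False sigma_eq_append_contextI[OF replicate_sigma_multiple[of m x], where p = "[]"]
      by simp
    then show ?thesis using sigma_eq_trans[OF _ rest] by simp
  qed
qed simp

end

lemma com_sigma_eq_count_mod:
  assumes "0 < \<sigma> b" and "com_sigma_eq \<sigma> u v"
  shows "count (mset u) b mod (\<sigma> b - 1) = count (mset v) b mod (\<sigma> b - 1)"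
  using assms(2) unfolding com_sigma_eq_def
proof (rule pres_cong_invariant[rotated])
  fix x y l r
  assume "com_sigma_rel \<sigma> l r"
  then consider a c where "l = [a, c]" "r = [c, a]" | a where "l = replicate (\<sigma> a) a" "r = [a]"
    unfolding com_sigma_rel_def by blast
  then show "count (mset (x @ l @ y)) b mod (\<sigma> b - 1) = count (mset (x @ r @ y)) b mod (\<sigma> b - 1)"
  proof cases
    case (2 a)
    show ?thesis
    proof (cases "a = b")
      case True
      then have "count (mset (x @ l @ y)) b = count (mset (x @ r @ y)) b + (\<sigma> b - 1)"
        using 2 assms(1) by simp
      then show ?thesis by (simp only: mod_add_self2)
    qed (use 2 in simp)
  qed simp
qed

lemma mod_eq_cancel_left:
  fixes x y c c' n :: nat
  assumes "x + c = y + c'" and "x mod n = y mod n"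
  shows "c mod n = c' mod n"
proof -
  obtain q1 q2 where "x + n * q1 = y + n * q2" using assms(2) nat_mod_eq_iff by blast
  then have "c + n * q2 = c' + n * q1" using assms(1) by linarith
  then show ?thesis unfolding nat_mod_eq_iff by blast
qed

context chinese_sigma
begin

definition inflation_related :: "'a list \<Rightarrow> 'a list \<Rightarrow> bool" where
  "inflation_related u v \<longleftrightarrow> (\<exists>c c'. inflate {} c u \<approx> inflate {} c' v \<and>
     (\<forall>b. count (mset u) b + c b = count (mset v) b + c' b))"

lemma equivp_inflation_related: "equivp inflation_related"
proof (intro equivpI reflpI sympI transpI)
  fix u :: "'a list"
  have "inflate {} (\<lambda>_. 0) u = u" by (rule inflate_zero) simp
  then show "inflation_related u u"
    unfolding inflation_related_def by (intro exI[of _ "\<lambda>_. 0"]) simp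
next
  fix u v :: "'a list"
  assume "inflation_related u v"
  then show "inflation_related v u"
    unfolding inflation_related_def by (metis sigma_eq_sym)
next
  fix u v w :: "'a list"
  assume "inflation_related u v" and "inflation_related v w"
  then obtain c1 c1' c2 c2' where uv: "inflate {} c1 u \<approx> inflate {} c1' v"
    and vw: "inflate {} c2 v \<approx> inflate {} c2' w"
    and counts: "\<And>b. count (mset u) b + c1 b = count (mset v) b + c1' b"
      "\<And>b. count (mset v) b + c2 b = count (mset w) b + c2' b"
    unfolding inflation_related_def by blast
  have "inflate {} (\<lambda>b. c2 b + c1 b) u \<approx> inflate {} (\<lambda>b. c2 b + c1' b) v"
    using sigma_eq_inflate[OF uv, of c2] by (simp add: inflate_inflate)
  also have "\<dots> = inflate {} (\<lambda>b. c1' b + c2 b) v"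
    by (simp add: add.commute)
  also have "\<dots> \<approx> inflate {} (\<lambda>b. c1' b + c2' b) w"
    using sigma_eq_inflate[OF vw, of c1'] by (simp add: inflate_inflate)
  finally have "inflate {} (\<lambda>b. c2 b + c1 b) u \<approx> inflate {} (\<lambda>b. c1' b + c2' b) w" .
  moreover have "count (mset u) b + (c2 b + c1 b) = count (mset w) b + (c1' b + c2' b)" for b
    using counts(1)[of b] counts(2)[of b] by simp
  ultimately show "inflation_related u w"
    unfolding inflation_related_def by blast
qed

lemma inflation_related_rule:
  assumes "chinese_sigma_rel (\<lambda>_. 2) l r"
  shows "inflation_related (x @ l @ y) (x @ r @ y)"
proof -
  from assms consider "chinese_rel l r" | a where "l = [a, a]" "r = [a]"
    unfolding chinese_sigma_rel_def by (auto simp: numeral_2_eq_2)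
  then show ?thesis
  proof cases
    case 1
    then have "mset l = mset r"
      unfolding chinese_rel_def by (auto simp: add_mset_commute)
    moreover have "x @ l @ y \<approx> x @ r @ y"
      using sigma_eq_chineseI[OF 1] by simp
    moreover have "inflate {} (\<lambda>_. 0) w = w" for w :: "'a list" by (rule inflate_zero) simp
    ultimately show ?thesis
      unfolding inflation_related_def by (intro exI[of _ "\<lambda>_. 0"]) simp
  next
    case (2 a)
    have "inflate {} (\<lambda>_. 0) (x @ l @ y) \<approx> inflate {} (\<lambda>b. of_bool (b = a)) (x @ r @ y)"
      using sigma_eq_sym[OF inflate_single_any_occurrence[of a x y]] 2
        inflate_zero[of "x @ l @ y" "{}" "\<lambda>_. 0"]
      by simp
    moreover have "\<forall>b. count (mset (x @ l @ y)) b + 0 =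
        count (mset (x @ r @ y)) b + of_bool (b = a)"
      using 2 by simp
    ultimately show ?thesis
      unfolding inflation_related_def by blast
  qed
qed

lemma inflation_related_if_ch2_eq:
  "ch_sigma_eq (\<lambda>_. 2) u v \<Longrightarrow> inflation_related u v"
  unfolding ch_sigma_eq_def
  by (rule pres_cong_least[OF equivp_inflation_related inflation_related_rule])

lemma sigma_eq_if_ch2_eq_and_com_eq:
  assumes "ch_sigma_eq (\<lambda>_. 2) u v" and "com_sigma_eq \<sigma> u v"
  shows "u \<approx> v"
proof -
  obtain c c' where uv: "inflate {} c u \<approx> inflate {} c' v"
    and counts: "\<And>b. count (mset u) b + c b = count (mset v) b + c' b"
    using inflation_related_if_ch2_eq[OF assms(1)] unfolding inflation_related_def by blast
  define n where "n b = \<sigma> b - 1" for b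
  have "0 < n b" for b using sigma_ge_2[of b] by (simp add: n_def)
  have "c b mod n b = c' b mod n b" for b
    using mod_eq_cancel_left[OF counts com_sigma_eq_count_mod[OF sigma_pos assms(2)]]
    by (simp add: n_def)
  define d where "d b = c b * (n b - 1)" for b
  have "d b + c b = c b * n b" for b
    using \<open>0 < n b\<close> by (simp add: d_def algebra_simps)
  then have dc: "n b dvd d b + c b" for b by simp
  have "(d b + c' b) mod n b = (d b + c b) mod n b" for b
    using \<open>c b mod n b = c' b mod n b\<close> by (metis mod_add_right_eq)
  then have dc': "n b dvd d b + c' b" for b
    using dc by (simp add: dvd_eq_mod_eq_0)
  have "u \<approx> inflate {} (\<lambda>b. d b + c b) u"
    by (rule sigma_eq_sym, rule inflate_sigma_multiples) (use dc in \<open>simp add: n_def\<close>)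
  also have "\<dots> \<approx> inflate {} (\<lambda>b. d b + c' b) v"
    using sigma_eq_inflate[OF uv, of d] by (simp add: inflate_inflate)
  also have "\<dots> \<approx> v"
    by (rule inflate_sigma_multiples) (use dc' in \<open>simp add: n_def\<close>)
  finally show ?thesis .
qed

end

theorem mainTheorem2:
  fixes \<sigma> :: "'a::{finite,linorder} \<Rightarrow> nat"
  assumes "\<forall>a. \<sigma> a \<ge> 2"
  shows "\<forall>u v :: 'a list.
           ch_sigma_eq (\<lambda>_. 2) u v \<and> com_sigma_eq \<sigma> u v \<longrightarrow> ch_sigma_eq \<sigma> u v"
proof -
  interpret chinese_sigma \<sigma> using assms by unfold_locales simp
  show ?thesis using sigma_eq_if_ch2_eq_and_com_eq by blast
qed

end
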